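(* Assume [LJ1]–[LJ4] and additionally $J_1(\gamma)<0$, $J_2(\gamma)<0$, $J_2(\delta_1)<0$. Then: (i) $\tilde B_{IFJ}(n,1)=-J_0(\gamma)$ for all $n\in\{1,2,\dots\}\cup\{+\infty\}$; (ii) $\tilde B_{IFJ}(1,k)=B(\gamma)-\frac32J_0(\gamma)$ for all $k\in\{2,3,\dots\}\cup\{+\infty\}$; (iii) $\tilde B_{IFJ}(n,k)=B_{AIF}(n)$ for all $n,k\in\{2,3,\dots\}\cup\{+\infty\}$.
   Context: Potentials: $J_1,J_2:\mathbb R\to(-\infty,+\infty]$; $J_{CB}:=J_1+J_2$; $J_0(z):=J_2(z)+\frac12\inf\{J_1(z_1)+J_1(z_2):z_1+z_2=2z\}$; $J_0^{**}$ is the convex lower semicontinuous envelope of $J_0$. Hypotheses: [LJ1] $\{z:J_0(z)=J_0^{**}(z)\}\cap\{z:J_0\text{ is affine in a neighbourhood of }z\}=\emptyset$. [LJ2] for every $z$ with $J_0(z)=J_0^{**}(z)$, the set $\{(z_1,z_2):z_1+z_2=2z,\ J_0(z)=J_2(z)+\frac12(J_1(z_1)+J_1(z_2))\}$ has exactly one element. [LJ3] $J_1,J_2$ are $C^{1,\alpha}$ on their domains for some $0<\alpha\le1$, $J_0$ is $C^1$ on its domain, $\operatorname{dom}J_1=\operatorname{dom}J_2\supset(0,+\infty)$, $\lim_{z\to+\infty}J_j(z)=0$ ($j=1,2$) and $\lim_{z\to+\infty}J_0(z)=:J_0(+\infty)\in\mathbb R$. [LJ4] there is a convex $\Psi:\mathbb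 R\to[0,+\infty]$ with $\lim_{z\to-\infty}\Psi(z)/|z|=+\infty$ and constants $c_1,c_2>0$ with $c_1(\Psi(z)-1)\le J_j(z)\le c_2\max\{\Psi(z),|z|\}$ for all $z\in\mathbb R$, $j=1,2$; there are $\delta_1,\delta_2,\gamma>0$ with $\{\delta_j\}=\operatorname{argmin}J_j$ and $\{\gamma\}=\operatorname{argmin}J_0$; $J_j$ is strictly convex on $(-\infty,\delta_j)\cap\operatorname{dom}J_j$; $J_0(\gamma)<J_0(+\infty)$; and $J_0(z)=J_0^{**}(z)$ for all $z\le\gamma$. Boundary layer energies (with $\mathbb N=\{0,1,2,\dots\}$): $B(\gamma):=\inf_{N\in\mathbb N}\min\{\frac12J_1(v^1-v^0)+\sum_{i\ge0}[J_2(\frac{v^{i+2}-v^i}{2})+\frac12J_1(v^{i+2}-v^{i+1})+\frac12J_1(v^{i+1}-v^i)-J_0(\gamma)]:v:\mathbb N\to\mathbb R,\ v^0=0,\ v^{i+1}-v^i=\gamma\ \forall i\ge N\}$; for $m\in\mathbb N$, $B_{IF}(m):=\inf_{k\in\mathbb N}\min\{\frac12J_1(v^1-v^0)+\sum_{i=0}^{k-1}[J_2(\frac{v^{i+2}-v^i}{2})+\frac12J_1(v^{i+2}-v^{i+1})+\frac12J_1(v^{i+1}-v^i)-J_0(\gamma)]+\frac{2m+1}{2}(J_{CB}(v^{k+1}-v^k)-J_0(\gamma)):v:\mathbb N\to\mathbb R,\ v^0=0\}$, and $B_{IF}(+\infty):=B(\gamma)$; for $n\in\{1,2,\dots\}\cup\{+\infty\}$,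 $B_{AIF}(n):=B_{IF}(n-1)+B(\gamma)-2J_0(\gamma)$ (with $+\infty-1=+\infty$); for $n,k\in\{1,2,\dots\}\cup\{+\infty\}$, $\tilde B_{IFJ}(n,k):=\min\{B_{AIF}(n),\,B(\gamma)-(\frac12+n)J_0(\gamma),\,-kJ_0(\gamma)\}$. *)

theory Defs
  imports "HOL-Analysis.Analysis"
begin

text \<open>Potentials are maps real \<Rightarrow> ereal that never take the value minus infinity.\<close>

definition edom :: "(real \<Rightarrow> ereal) \<Rightarrow> real set" where
  "edom J = {z. J z < \<infinity>}"

definition J0 :: "(real \<Rightarrow> ereal) \<Rightarrow> (real \<Rightarrow> ereal) \<Rightarrow> real \<Rightarrow> ereal" where
  "J0 J1 J2 z = J2 z + ereal (1/2) *
     (INF p \<in> {p :: real \<times> real. fst p + snd p = 2 * z}. J1 (fst p) + J1 (snd p))"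

definition JCB :: "(real \<Rightarrow> ereal) \<Rightarrow> (real \<Rightarrow> ereal) \<Rightarrow> real \<Rightarrow> ereal" where
  "JCB J1 J2 z = J1 z + J2 z"

definition conv_env :: "(real \<Rightarrow> ereal) \<Rightarrow> real \<Rightarrow> ereal" where
  "conv_env f z = (SUP ab \<in> {ab :: real \<times> real. \<forall>x. ereal (fst ab * x + snd ab) \<le> f x}.
                     ereal (fst ab * z + snd ab))"

definition affine_near :: "(real \<Rightarrow> ereal) \<Rightarrow> real \<Rightarrow> bool" where
  "affine_near f z \<longleftrightarrow> (\<exists>e>0. \<exists>a b. \<forall>x. \<bar>x - z\<bar> < e \<longrightarrow> f x = ereal (a * x + b))"

definition C1alpha_on :: "real \<Rightarrow> (real \<Rightarrow> ereal) \<Rightarrow> real set \<Rightarrow> bool" where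
  "C1alpha_on \<alpha> f S \<longleftrightarrow> (\<exists>f'. (\<forall>z\<in>S. ((\<lambda>x. real_of_ereal (f x)) has_real_derivative f' z) (at z within S))
      \<and> (\<forall>K. compact K \<and> K \<subseteq> S \<longrightarrow> (\<exists>C. \<forall>x\<in>K. \<forall>y\<in>K. \<bar>f' x - f' y\<bar> \<le> C * \<bar>x - y\<bar> powr \<alpha>)))"

definition C1_on :: "(real \<Rightarrow> ereal) \<Rightarrow> real set \<Rightarrow> bool" where
  "C1_on f S \<longleftrightarrow> (\<exists>f'. (\<forall>z\<in>S. ((\<lambda>x. real_of_ereal (f x)) has_real_derivative f' z) (at z within S))
      \<and> continuous_on S f')"

definition econvex :: "(real \<Rightarrow> ereal) \<Rightarrow> bool" where
  "econvex f \<longleftrightarrow> (\<forall>x y t. 0 \<le> t \<and> t \<le> 1 \<longrightarrow>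
      f ((1 - t) * x + t * y) \<le> ereal (1 - t) * f x + ereal t * f y)"

definition estrict_convex_on :: "real set \<Rightarrow> (real \<Rightarrow> ereal) \<Rightarrow> bool" where
  "estrict_convex_on S f \<longleftrightarrow> (\<forall>x\<in>S. \<forall>y\<in>S. \<forall>t. x \<noteq> y \<and> 0 < t \<and> t < 1 \<longrightarrow>
      f ((1 - t) * x + t * y) < ereal (1 - t) * f x + ereal t * f y)"

definition LJ1 :: "(real \<Rightarrow> ereal) \<Rightarrow> (real \<Rightarrow> ereal) \<Rightarrow> bool" where
  "LJ1 J1 J2 \<longleftrightarrow> {z. J0 J1 J2 z = conv_env (J0 J1 J2) z} \<inter> {z. affine_near (J0 J1 J2) z} = {}"

definition LJ2 :: "(real \<Rightarrow> ereal) \<Rightarrow> (real \<Rightarrow> ereal) \<Rightarrow> bool" where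
  "LJ2 J1 J2 \<longleftrightarrow> (\<forall>z \<in> edom (J0 J1 J2). J0 J1 J2 z = conv_env (J0 J1 J2) z \<longrightarrow>
      (\<exists>!p :: real \<times> real. fst p + snd p = 2 * z \<and>
          J0 J1 J2 z = J2 z + ereal (1/2) * (J1 (fst p) + J1 (snd p))))"

definition LJ3 :: "(real \<Rightarrow> ereal) \<Rightarrow> (real \<Rightarrow> ereal) \<Rightarrow> bool" where
  "LJ3 J1 J2 \<longleftrightarrow>
     (\<exists>\<alpha>. 0 < \<alpha> \<and> \<alpha> \<le> 1 \<and> C1alpha_on \<alpha> J1 (edom J1) \<and> C1alpha_on \<alpha> J2 (edom J2))
     \<and> C1_on (J0 J1 J2) (edom (J0 J1 J2))
     \<and> edom J1 = edom J2 \<and> {0<..} \<subseteq> edom J1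
     \<and> (J1 \<longlongrightarrow> 0) at_top \<and> (J2 \<longlongrightarrow> 0) at_top
     \<and> (\<exists>L::real. (J0 J1 J2 \<longlongrightarrow> ereal L) at_top)"

text \<open>The value J0(+infinity) (meaningful under LJ3).\<close>
definition J0_infty :: "(real \<Rightarrow> ereal) \<Rightarrow> (real \<Rightarrow> ereal) \<Rightarrow> ereal" where
  "J0_infty J1 J2 = Lim at_top (J0 J1 J2)"

definition LJ4 :: "(real \<Rightarrow> ereal) \<Rightarrow> (real \<Rightarrow> ereal) \<Rightarrow> real \<Rightarrow> real \<Rightarrow> real \<Rightarrow> bool" where
  "LJ4 J1 J2 \<delta>1 \<delta>2 \<gamma> \<longleftrightarrow>
     (\<exists>\<Psi> :: real \<Rightarrow> ereal. (\<forall>z. 0 \<le> \<Psi> z) \<and> econvex \<Psi>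
        \<and> ((\<lambda>z. \<Psi> z / ereal \<bar>z\<bar>) \<longlongrightarrow> \<infinity>) at_bot
        \<and> (\<exists>c1 c2. c1 > 0 \<and> c2 > 0 \<and> (\<forall>z. \<forall>J \<in> {J1, J2}.
              ereal c1 * (\<Psi> z - 1) \<le> J z \<and> J z \<le> ereal c2 * max (\<Psi> z) (ereal \<bar>z\<bar>))))
     \<and> \<delta>1 > 0 \<and> \<delta>2 > 0 \<and> \<gamma> > 0
     \<and> (\<forall>z. z \<noteq> \<delta>1 \<longrightarrow> J1 \<delta>1 < J1 z)
     \<and> (\<forall>z. z \<noteq> \<delta>2 \<longrightarrow> J2 \<delta>2 < J2 z)
     \<and> (\<forall>z. z \<noteq> \<gamma> \<longrightarrow> J0 J1 J2 \<gamma> < J0 J1 J2 z)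
     \<and> estrict_convex_on ({..<\<delta>1} \<inter> edom J1) J1
     \<and> estrict_convex_on ({..<\<delta>2} \<inter> edom J2) J2
     \<and> J0 J1 J2 \<gamma> < J0_infty J1 J2
     \<and> (\<forall>z \<le> \<gamma>. J0 J1 J2 z = conv_env (J0 J1 J2) z)"

definition cellE :: "(real \<Rightarrow> ereal) \<Rightarrow> (real \<Rightarrow> ereal) \<Rightarrow> real \<Rightarrow> (nat \<Rightarrow> real) \<Rightarrow> nat \<Rightarrow> ereal" where
  "cellE J1 J2 \<gamma> v i = J2 ((v (i+2) - v i) / 2) + ereal (1/2) * J1 (v (i+2) - v (i+1))
      + ereal (1/2) * J1 (v (i+1) - v i) - J0 J1 J2 \<gamma>"

definition Bgam :: "(real \<Rightarrow> ereal) \<Rightarrow> (real \<Rightarrow> ereal) \<Rightarrow> real \<Rightarrow> ereal" where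
  "Bgam J1 J2 \<gamma> = (INF N :: nat. INF v \<in> {v :: nat \<Rightarrow> real. v 0 = 0 \<and> (\<forall>i \<ge> N. v (i+1) - v i = \<gamma>)}.
      ereal (1/2) * J1 (v 1 - v 0) + lim (\<lambda>n. \<Sum>i<n. cellE J1 J2 \<gamma> v i))"

definition BIF :: "(real \<Rightarrow> ereal) \<Rightarrow> (real \<Rightarrow> ereal) \<Rightarrow> real \<Rightarrow> enat \<Rightarrow> ereal" where
  "BIF J1 J2 \<gamma> m = (case m of
      enat m' \<Rightarrow> (INF k :: nat. INF v \<in> {v :: nat \<Rightarrow> real. v 0 = 0}.
          ereal (1/2) * J1 (v 1 - v 0) + (\<Sum>i<k. cellE J1 J2 \<gamma> v i)
          + ereal ((2 * real m' + 1) / 2) * (JCB J1 J2 (v (k+1) - v k) - J0 J1 J2 \<gamma>))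
    | \<infinity> \<Rightarrow> Bgam J1 J2 \<gamma>)"

definition BAIF :: "(real \<Rightarrow> ereal) \<Rightarrow> (real \<Rightarrow> ereal) \<Rightarrow> real \<Rightarrow> enat \<Rightarrow> ereal" where
  "BAIF J1 J2 \<gamma> n = BIF J1 J2 \<gamma> (n - 1) + Bgam J1 J2 \<gamma> - ereal 2 * J0 J1 J2 \<gamma>"

definition BIFJ :: "(real \<Rightarrow> ereal) \<Rightarrow> (real \<Rightarrow> ereal) \<Rightarrow> real \<Rightarrow> enat \<Rightarrow> enat \<Rightarrow> ereal" where
  "BIFJ J1 J2 \<gamma> n k = min (BAIF J1 J2 \<gamma> n)
      (min (Bgam J1 J2 \<gamma> - (ereal (1/2) + ereal_of_enat n) * J0 J1 J2 \<gamma>)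
           (- (ereal_of_enat k * J0 J1 J2 \<gamma>)))"

end

theory Submission
  imports Defs
begin

(* Write j = J0(gamma) and a = J1(delta1) = min J1.  By LJ2 the optimal splitting
   of gamma is symmetric, so j = J1(gamma) + J2(gamma) < 0, and
   j = min J0 <= J0(delta1) <= J1(delta1) + J2(delta1) < a.
   Every cell of the boundary layer energies dominates J0(gamma), so all cells are nonnegative,
   and the remaining terms are bounded below by J1/2 >= a/2; the constant-slope profile
   v^i = gamma*i has vanishing cells and shows that B(gamma) and every B_IF(m) are at most
   J1(gamma)/2 < 0.  Hence B(gamma) and B_IF(m) are reals in [a/2, 0], and the three
   identities reduce to comparing the three entries of the minimum defining B~_IFJ,
   using only j < 0 and j < a. *)

lemma ereal_of_enat_one [simp]: "ereal_of_enat 1 = 1"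
  by (simp add: one_enat_def)

lemma ereal_half_add_self: "ereal (1/2) * (x + x) = (x::ereal)"
  by (cases x) auto

lemma J0_le_split:
  assumes J1_not_minf: "\<forall>z. J1 z \<noteq> - \<infinity>" and split: "x + y = 2 * w"
  shows "J0 J1 J2 w \<le> J2 w + ereal (1/2) * J1 x + ereal (1/2) * J1 y"
proof -
  have "(INF p \<in> {p :: real \<times> real. fst p + snd p = 2 * w}. J1 (fst p) + J1 (snd p)) \<le> J1 x + J1 y"
    by (rule INF_lower2[of "(x, y)"]) (use split in auto)
  then have "ereal (1/2) * (INF p \<in> {p :: real \<times> real. fst p + snd p = 2 * w}. J1 (fst p) + J1 (snd p))
      \<le> ereal (1/2) * (J1 x + J1 y)"
    by (rule ereal_mult_left_mono) auto
  also have "ereal (1/2) * (J1 x + J1 y) = ereal (1/2) * J1 x + ereal (1/2) * J1 y"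
    using J1_not_minf by (cases "J1 x"; cases "J1 y") auto
  finally show ?thesis unfolding J0_def by (simp add: add_mono add.assoc)
qed

text \<open>The trivial splitting z + z = 2z gives J0 <= J_CB.\<close>
lemma J0_le_JCB:
  assumes "\<forall>z. J1 z \<noteq> - \<infinity>"
  shows "J0 J1 J2 z \<le> JCB J1 J2 z"
proof -
  have "J0 J1 J2 z \<le> J2 z + ereal (1/2) * J1 z + ereal (1/2) * J1 z"
    by (rule J0_le_split[OF assms]) simp
  also have "\<dots> = JCB J1 J2 z"
    using assms by (cases "J1 z"; cases "J2 z") (auto simp: JCB_def)
  finally show ?thesis .
qed

text \<open>Under LJ2 the unique optimal splitting at a point where J0 is convex is symmetric
  (its swap is optimal too), so there J0 coincides with J_CB.\<close>
lemma J0_eq_JCB_at_convex_point: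
  assumes "LJ2 J1 J2" and "z \<in> edom (J0 J1 J2)" and "J0 J1 J2 z = conv_env (J0 J1 J2) z"
  shows "J0 J1 J2 z = JCB J1 J2 z"
proof -
  from assms obtain p where p: "fst p + snd p = 2 * z"
      "J0 J1 J2 z = J2 z + ereal (1/2) * (J1 (fst p) + J1 (snd p))"
    and unique: "\<And>q. fst q + snd q = 2 * z \<and> J0 J1 J2 z = J2 z + ereal (1/2) * (J1 (fst q) + J1 (snd q))
        \<Longrightarrow> q = p"
    unfolding LJ2_def by metis
  have "(snd p, fst p) = p"
    by (rule unique) (use p in \<open>auto simp: add.commute\<close>)
  then have "snd p = fst p" by (metis fst_conv)
  then have "fst p = z" "snd p = z"
    using p(1) by linarith+
  with p(2) show ?thesis by (simp add: JCB_def ereal_half_add_self add.commute)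
qed

lemma lim_partial_sums_nonneg:
  fixes f :: "nat \<Rightarrow> ereal"
  assumes "\<And>i. 0 \<le> f i"
  shows "0 \<le> lim (\<lambda>n. \<Sum>i<n. f i)"
proof -
  let ?S = "\<lambda>n. \<Sum>i<n. f i"
  have "incseq ?S" by (rule incseq_SucI) (simp add: assms add_increasing2)
  then have "lim ?S = (SUP n. ?S n)" by (rule limI[OF LIMSEQ_SUP])
  moreover have "?S 0 \<le> (SUP n. ?S n)" by (rule SUP_upper) simp
  ultimately show ?thesis by simp
qed

text \<open>The profile with constant slope gamma, the bulk configuration of the boundary layers.\<close>
definition slope_profile :: "real \<Rightarrow> nat \<Rightarrow> real" where
  "slope_profile \<gamma> i = \<gamma> * real i"

lemma slope_profile_simps:
  "slope_profile \<gamma> 0 = 0" "slope_profile \<gamma> (i + 1) - slope_profile \<gamma> i = \<gamma>"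
  "slope_profile \<gamma> (i + 2) - slope_profile \<gamma> (i + 1) = \<gamma>"
  "(slope_profile \<gamma> (i + 2) - slope_profile \<gamma> i) / 2 = \<gamma>"
  by (simp_all add: slope_profile_def algebra_simps)

context
  fixes J1 J2 :: "real \<Rightarrow> ereal" and \<gamma> :: real
  assumes J1_not_minf: "\<forall>z. J1 z \<noteq> - \<infinity>"
    and gamma_min: "\<And>z. J0 J1 J2 \<gamma> \<le> J0 J1 J2 z"
    and J0_gamma: "J0 J1 J2 \<gamma> = JCB J1 J2 \<gamma>"
    and J1_gamma_finite: "\<bar>J1 \<gamma>\<bar> \<noteq> \<infinity>" and J2_gamma_finite: "\<bar>J2 \<gamma>\<bar> \<noteq> \<infinity>"
begin

lemma J0_gamma_finite: "\<bar>J0 J1 J2 \<gamma>\<bar> \<noteq> \<infinity>"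
  using J1_gamma_finite J2_gamma_finite unfolding J0_gamma JCB_def by auto

text \<open>Each cell is the energy of a splitting, hence dominates J0 at its midpoint slope.\<close>
lemma cellE_nonneg: "0 \<le> cellE J1 J2 \<gamma> v i"
proof -
  have "J0 J1 J2 \<gamma> \<le> J0 J1 J2 ((v (i+2) - v i) / 2)" by (rule gamma_min)
  also have "\<dots> \<le> J2 ((v (i+2) - v i) / 2) + ereal (1/2) * J1 (v (i+2) - v (i+1))
      + ereal (1/2) * J1 (v (i+1) - v i)"
    by (rule J0_le_split[OF J1_not_minf]) simp
  moreover obtain j where "J0 J1 J2 \<gamma> = ereal j"
    using J0_gamma_finite by (cases "J0 J1 J2 \<gamma>") auto
  ultimately show ?thesis
    unfolding cellE_def by (simp add: ereal_le_minus_iff add.commute)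
qed

lemma cellE_slope_profile: "cellE J1 J2 \<gamma> (slope_profile \<gamma>) i = 0"
  using J1_gamma_finite J2_gamma_finite J0_gamma unfolding cellE_def slope_profile_simps
  by (cases "J1 \<gamma>"; cases "J2 \<gamma>") (simp_all add: JCB_def)

lemma Bgam_bounds:
  assumes J1_lower: "\<And>z. ereal a \<le> J1 z"
  shows "ereal (a/2) \<le> Bgam J1 J2 \<gamma>" and "Bgam J1 J2 \<gamma> \<le> ereal (1/2) * J1 \<gamma>"
proof -
  have half: "ereal (a/2) \<le> ereal (1/2) * J1 x" for x
    using ereal_mult_left_mono[OF J1_lower[of x], of "ereal (1/2)"] by simp
  show "ereal (a/2) \<le> Bgam J1 J2 \<gamma>"
    unfolding Bgam_def
    by (intro INF_greatest) (simp add: add_increasing2 lim_partial_sums_nonneg cellE_nonneg half)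
  have "lim (\<lambda>n. \<Sum>i<n. cellE J1 J2 \<gamma> (slope_profile \<gamma>) i) = 0"
    by (simp add: cellE_slope_profile limI)
  then show "Bgam J1 J2 \<gamma> \<le> ereal (1/2) * J1 \<gamma>"
    unfolding Bgam_def
    by (intro INF_lower2[of 0] INF_lower2[of "slope_profile \<gamma>"])
      (auto simp: slope_profile_def algebra_simps)
qed

lemma BIF_bounds:
  assumes J1_lower: "\<And>z. ereal a \<le> J1 z"
  shows "ereal (a/2) \<le> BIF J1 J2 \<gamma> m" and "BIF J1 J2 \<gamma> m \<le> ereal (1/2) * J1 \<gamma>"
proof -
  have "ereal (a/2) \<le> BIF J1 J2 \<gamma> m \<and> BIF J1 J2 \<gamma> m \<le> ereal (1/2) * J1 \<gamma>"
  proof (cases m)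
    case infinity
    then show ?thesis using Bgam_bounds[OF J1_lower] by (simp add: BIF_def)
  next
    case (enat m')
    have half: "ereal (a/2) \<le> ereal (1/2) * J1 x" for x
      using ereal_mult_left_mono[OF J1_lower[of x], of "ereal (1/2)"] by simp
    obtain j where j: "J0 J1 J2 \<gamma> = ereal j"
      using J0_gamma_finite by (cases "J0 J1 J2 \<gamma>") auto
    have bulk: "0 \<le> JCB J1 J2 x - J0 J1 J2 \<gamma>" for x
      using order_trans[OF gamma_min J0_le_JCB[OF J1_not_minf]] j
      by (simp add: ereal_le_minus_iff)
    have "JCB J1 J2 \<gamma> - J0 J1 J2 \<gamma> = 0"
      using J0_gamma J0_gamma_finite by simp
    then have profile: "ereal (1/2) * J1 (slope_profile \<gamma> 1 - slope_profile \<gamma> 0)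
        + (\<Sum>i<0. cellE J1 J2 \<gamma> (slope_profile \<gamma>) i)
        + ereal ((2 * real m' + 1) / 2) * (JCB J1 J2 (slope_profile \<gamma> (0+1) - slope_profile \<gamma> 0)
            - J0 J1 J2 \<gamma>) = ereal (1/2) * J1 \<gamma>"
      by (simp add: slope_profile_def)
    show ?thesis
      unfolding BIF_def enat enat.simps
    proof (intro conjI INF_greatest)
      show "ereal (a/2) \<le> ereal (1/2) * J1 (v 1 - v 0) + (\<Sum>i<k. cellE J1 J2 \<gamma> v i)
          + ereal ((2 * real m' + 1) / 2) * (JCB J1 J2 (v (k+1) - v k) - J0 J1 J2 \<gamma>)" for k v
        by (intro add_increasing2 sum_nonneg cellE_nonneg half) (simp_all add: bulk)
      show "(INF k. INF v\<in>{v. v 0 = 0}. ereal (1/2) * J1 (v 1 - v 0) + (\<Sum>i<k. cellE J1 J2 \<gamma> v i)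
          + ereal ((2 * real m' + 1) / 2) * (JCB J1 J2 (v (k+1) - v k) - J0 J1 J2 \<gamma>))
          \<le> ereal (1/2) * J1 \<gamma>"
        by (intro INF_lower2[of 0] INF_lower2[of "slope_profile \<gamma>"])
          (use profile in \<open>auto simp: slope_profile_simps\<close>)
    qed
  qed
  then show "ereal (a/2) \<le> BIF J1 J2 \<gamma> m" and "BIF J1 J2 \<gamma> m \<le> ereal (1/2) * J1 \<gamma>"
    by auto
qed

end

lemma minus_enat_times_neg_mono:
  fixes n :: enat and j x :: real
  assumes "j < 0" and "enat c \<le> n"
  shows "ereal (- ((x + real c) * j)) \<le> - ((ereal x + ereal_of_enat n) * ereal j)"
proof (cases n)
  case (enat n')
  with assms(2) have "real c \<le> real n'" by simp
  then have "(x + real n') * j \<le> (x + real c) * j"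
    using assms(1) by (intro mult_right_mono_neg) auto
  then show ?thesis using enat by simp
qed (use assms(1) in simp)

lemma minus_enat_times_neg_mono0:
  fixes k :: enat and j :: real
  assumes "j < 0" and "enat c \<le> k"
  shows "ereal (- (real c * j)) \<le> - (ereal_of_enat k * ereal j)"
  using minus_enat_times_neg_mono[OF assms, of 0] by simp

context
  fixes J1 J2 :: "real \<Rightarrow> ereal" and \<gamma> j a :: real
  assumes J0_gamma: "J0 J1 J2 \<gamma> = ereal j" and j_neg: "j < 0" and j_less_a: "j < a"
    and Bgam_range: "ereal (a/2) \<le> Bgam J1 J2 \<gamma>" "Bgam J1 J2 \<gamma> \<le> 0"
    and BIF_range: "\<And>m. ereal (a/2) \<le> BIF J1 J2 \<gamma> m" "\<And>m. BIF J1 J2 \<gamma> m \<le> 0"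
begin

lemma BAIF_value:
  obtains f b where "BAIF J1 J2 \<gamma> n = ereal (f + b - 2 * j)" "Bgam J1 J2 \<gamma> = ereal b"
    "a/2 \<le> f" "f \<le> 0" "a/2 \<le> b" "b \<le> 0"
proof -
  obtain b where b: "Bgam J1 J2 \<gamma> = ereal b" "a/2 \<le> b" "b \<le> 0"
    using Bgam_range by (cases "Bgam J1 J2 \<gamma>") auto
  obtain f where f: "BIF J1 J2 \<gamma> (n - 1) = ereal f" "a/2 \<le> f" "f \<le> 0"
    using BIF_range[of "n - 1"] by (cases "BIF J1 J2 \<gamma> (n - 1)") auto
  show thesis
    by (rule that[OF _ b(1) f(2,3) b(2,3)]) (simp add: BAIF_def f(1) b(1) J0_gamma)
qed

lemma BIFJ_k_one:
  assumes "1 \<le> n"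
  shows "BIFJ J1 J2 \<gamma> n 1 = - J0 J1 J2 \<gamma>"
proof -
  obtain f b where BAIF: "BAIF J1 J2 \<gamma> n = ereal (f + b - 2 * j)" and b: "Bgam J1 J2 \<gamma> = ereal b"
    and "a/2 \<le> f" "a/2 \<le> b"
    by (rule BAIF_value)
  then have "- J0 J1 J2 \<gamma> \<le> BAIF J1 J2 \<gamma> n"
    using j_less_a by (simp add: J0_gamma)
  moreover have "- J0 J1 J2 \<gamma> \<le> Bgam J1 J2 \<gamma> - (ereal (1/2) + ereal_of_enat n) * J0 J1 J2 \<gamma>"
  proof -
    have "- J0 J1 J2 \<gamma> \<le> ereal b + ereal (- ((1/2 + real 1) * j))"
      using \<open>a/2 \<le> b\<close> j_less_a unfolding J0_gamma distrib_right by simp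
    also have "\<dots> \<le> ereal b - (ereal (1/2) + ereal_of_enat n) * ereal j"
      unfolding minus_ereal_def
      by (intro add_left_mono minus_enat_times_neg_mono[OF j_neg])
        (use assms in \<open>simp add: one_enat_def\<close>)
    finally show ?thesis by (simp only: b J0_gamma)
  qed
  ultimately show ?thesis by (simp add: BIFJ_def min_def)
qed

lemma BIFJ_n_one:
  assumes "2 \<le> k"
  shows "BIFJ J1 J2 \<gamma> 1 k = Bgam J1 J2 \<gamma> - ereal (3/2) * J0 J1 J2 \<gamma>"
proof -
  obtain f b where BAIF: "BAIF J1 J2 \<gamma> 1 = ereal (f + b - 2 * j)" and b: "Bgam J1 J2 \<gamma> = ereal b"
    and "a/2 \<le> f" "b \<le> 0"
    by (rule BAIF_value)
  have middle: "Bgam J1 J2 \<gamma> - (ereal (1/2) + ereal_of_enat 1) * J0 J1 J2 \<gamma> = ereal (b - 3/2 * j)"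
    "Bgam J1 J2 \<gamma> - ereal (3/2) * J0 J1 J2 \<gamma> = ereal (b - 3/2 * j)"
    by (simp_all add: b J0_gamma)
  have middle_le_first: "ereal (b - 3/2 * j) \<le> BAIF J1 J2 \<gamma> 1"
    using BAIF \<open>a/2 \<le> f\<close> j_less_a by simp
  have "ereal (b - 3/2 * j) \<le> ereal (- (real 2 * j))"
    using \<open>b \<le> 0\<close> j_neg by simp
  also have "\<dots> \<le> - (ereal_of_enat k * J0 J1 J2 \<gamma>)"
    unfolding J0_gamma
    by (rule minus_enat_times_neg_mono0[OF j_neg]) (use assms in \<open>simp add: numeral_eq_enat\<close>)
  finally show ?thesis
    using middle_le_first by (simp add: BIFJ_def min_def middle)
qed

lemma BIFJ_n_k:
  assumes "2 \<le> n" and "2 \<le> k"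
  shows "BIFJ J1 J2 \<gamma> n k = BAIF J1 J2 \<gamma> n"
proof -
  obtain f b where BAIF: "BAIF J1 J2 \<gamma> n = ereal (f + b - 2 * j)" and b: "Bgam J1 J2 \<gamma> = ereal b"
    and "f \<le> 0" "b \<le> 0"
    by (rule BAIF_value)
  have "BAIF J1 J2 \<gamma> n \<le> ereal b + ereal (- ((1/2 + real 2) * j))"
    using BAIF \<open>f \<le> 0\<close> j_neg unfolding distrib_right by simp
  also have "\<dots> \<le> Bgam J1 J2 \<gamma> - (ereal (1/2) + ereal_of_enat n) * J0 J1 J2 \<gamma>"
    unfolding minus_ereal_def b J0_gamma
    by (intro add_left_mono minus_enat_times_neg_mono[OF j_neg])
      (use assms in \<open>simp add: numeral_eq_enat\<close>)
  finally have first_le_middle: "BAIF J1 J2 \<gamma> n \<le> \<dots>" .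
  have "BAIF J1 J2 \<gamma> n \<le> ereal (- (real 2 * j))"
    using BAIF \<open>f \<le> 0\<close> \<open>b \<le> 0\<close> by simp
  also have "\<dots> \<le> - (ereal_of_enat k * J0 J1 J2 \<gamma>)"
    unfolding J0_gamma
    by (rule minus_enat_times_neg_mono0[OF j_neg]) (use assms in \<open>simp add: numeral_eq_enat\<close>)
  finally show ?thesis
    using first_le_middle by (simp add: BIFJ_def min_def)
qed

end

text \<open>The hypotheses: J0(gamma) = J_CB(gamma) = j < 0 by LJ2, j < J1(delta1) = min J1 because
  J2(delta1) < 0, and the energies lie in [J1(delta1)/2, J1(gamma)/2]; the three comparisons
  then give (i)--(iii).\<close>
theorem lemma5p3:
  fixes J1 J2 :: "real \<Rightarrow> ereal" and \<delta>1 \<delta>2 \<gamma> :: real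
  assumes "\<forall>z. J1 z \<noteq> - \<infinity>" and "\<forall>z. J2 z \<noteq> - \<infinity>"
    and "LJ1 J1 J2" and "LJ2 J1 J2" and "LJ3 J1 J2" and "LJ4 J1 J2 \<delta>1 \<delta>2 \<gamma>"
    and "J1 \<gamma> < 0" and "J2 \<gamma> < 0" and "J2 \<delta>1 < 0"
  shows "(\<forall>n::enat. n \<ge> 1 \<longrightarrow> BIFJ J1 J2 \<gamma> n 1 = - J0 J1 J2 \<gamma>)
       \<and> (\<forall>k::enat. k \<ge> 2 \<longrightarrow> BIFJ J1 J2 \<gamma> 1 k = Bgam J1 J2 \<gamma> - ereal (3/2) * J0 J1 J2 \<gamma>)
       \<and> (\<forall>n k :: enat. n \<ge> 2 \<longrightarrow> k \<ge> 2 \<longrightarrow> BIFJ J1 J2 \<gamma> n k = BAIF J1 J2 \<gamma> n)"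
proof -
  from assms(6) have J1_strict_min: "\<forall>z. z \<noteq> \<delta>1 \<longrightarrow> J1 \<delta>1 < J1 z"
    and J0_strict_min: "\<forall>z. z \<noteq> \<gamma> \<longrightarrow> J0 J1 J2 \<gamma> < J0 J1 J2 z"
    and "J0 J1 J2 \<gamma> < J0_infty J1 J2" and convex: "J0 J1 J2 \<gamma> = conv_env (J0 J1 J2) \<gamma>"
    unfolding LJ4_def by blast+
  have J1_min: "J1 \<delta>1 \<le> J1 z" and J0_min: "J0 J1 J2 \<gamma> \<le> J0 J1 J2 z" for z
    using J1_strict_min J0_strict_min by (metis order_le_less)+
  have J0_JCB: "J0 J1 J2 \<gamma> = JCB J1 J2 \<gamma>"
    by (rule J0_eq_JCB_at_convex_point[OF assms(4) _ convex]) (use \<open>_ < J0_infty J1 J2\<close> in \<open>auto simp: edom_def\<close>)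
  have finite: "\<bar>J1 \<gamma>\<bar> \<noteq> \<infinity>" "\<bar>J2 \<gamma>\<bar> \<noteq> \<infinity>"
    using assms(1,2,7,8) by (auto simp: ereal_uminus_eq_reorder)
  obtain j where J0_j: "J0 J1 J2 \<gamma> = ereal j" and "j < 0"
    using J0_JCB finite assms(7,8) unfolding JCB_def by (cases "J1 \<gamma>"; cases "J2 \<gamma>") auto
  obtain a where a: "J1 \<delta>1 = ereal a"
    using J1_min[of \<gamma>] assms(1,7) by (cases "J1 \<delta>1") auto
  have "ereal j \<le> JCB J1 J2 \<delta>1"
    using J0_j J0_min[of \<delta>1] J0_le_JCB[OF assms(1)] order_trans by metis
  then have "j < a"
    using a assms(2,9) unfolding JCB_def by (cases "J2 \<delta>1") auto
  have J1_lower: "ereal a \<le> J1 z" for z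
    using J1_min a by simp
  have "ereal (1/2) * J1 \<gamma> \<le> 0"
    using assms(7) by (cases "J1 \<gamma>") auto
  note bounds = Bgam_bounds[OF assms(1) J0_min J0_JCB finite J1_lower]
    BIF_bounds[OF assms(1) J0_min J0_JCB finite J1_lower]
  note ranges = J0_j \<open>j < 0\<close> \<open>j < a\<close> bounds(1) order_trans[OF bounds(2) \<open>_ \<le> 0\<close>]
    bounds(3) order_trans[OF bounds(4) \<open>_ \<le> 0\<close>]
  show ?thesis
    using BIFJ_k_one[OF ranges] BIFJ_n_one[OF ranges] BIFJ_n_k[OF ranges] by blast
qed

end
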